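(* Let $s_1,\dots,s_M\in\mathbb{R}^2_-$ be distinct points. The functions $g_l$ and $h_{l,q}$, $l=1,\dots,M$, $q=1,2$, defined on $\widehat{\mathbb{S}}$ by $g_l(\alpha)=Q(\alpha)\mathrm{e}^{-\mathrm{i}k_-\mathrm{v}(\alpha)\cdot s_l}$ and $h_{l,q}(\alpha)=(\mathbf{e}_q\cdot\mathrm{v}(\alpha))Q(\alpha)\mathrm{e}^{-\mathrm{i}k_-\mathrm{v}(\alpha)\cdot s_l}$, are linearly independent.
   Context: $k_\pm>0$ are the wavenumbers of the upper and lower half-planes $\mathbb{R}^2_\pm=\{\pm x_2>0\}$. $\theta_c=\arccos(k_-/k_+)$ if $k_+>k_-$ and $\theta_c=0$ if $k_+<k_-$; $\widehat{\mathbb{S}}=\{(\cos\theta,\sin\theta):\theta\in(\pi+\theta_c,2\pi-\theta_c)\}$. With $\mu=k_+/k_-$ and $\alpha=(\alpha_1,\alpha_2)$: $\mathrm{v}(\alpha)=(\mu\alpha_1,\mathrm{sign}(\alpha_2)\sqrt{1-\mu^2\alpha_1^2})$, $Q(\alpha)=\frac{2\mu\alpha_2}{\mu\alpha_2+\mathrm{v}_2(\alpha)}$. $\mathbf{e}_1,\mathbf{e}_2$ is the standard basis of $\mathbb{R}^2$. The points $s_l$ are the centers of well-separated particles, hence distinct. *)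

theory Defs
  imports Complex_Main
begin

definition dot2 :: "real \<times> real \<Rightarrow> real \<times> real \<Rightarrow> real" where
  "dot2 a b = fst a * fst b + snd a * snd b"

definition theta_c :: "real \<Rightarrow> real \<Rightarrow> real" where
  "theta_c kp km = (if kp > km then arccos (km / kp) else 0)"

definition Shat :: "real \<Rightarrow> real \<Rightarrow> (real \<times> real) set" where
  "Shat kp km = {(cos \<theta>, sin \<theta>) | \<theta>. pi + theta_c kp km < \<theta> \<and> \<theta> < 2 * pi - theta_c kp km}"

definition vmap :: "real \<Rightarrow> real \<Rightarrow> real \<times> real \<Rightarrow> real \<times> real" where
  "vmap kp km \<alpha> = (let \<mu> = kp / km in
     (\<mu> * fst \<alpha>, sgn (snd \<alpha>) * sqrt (1 - \<mu>\<^sup>2 * (fst \<alpha>)\<^sup>2)))"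

definition Qfun :: "real \<Rightarrow> real \<Rightarrow> real \<times> real \<Rightarrow> real" where
  "Qfun kp km \<alpha> = (let \<mu> = kp / km in
     2 * \<mu> * snd \<alpha> / (\<mu> * snd \<alpha> + snd (vmap kp km \<alpha>)))"

definition gfun :: "real \<Rightarrow> real \<Rightarrow> real \<times> real \<Rightarrow> real \<times> real \<Rightarrow> complex" where
  "gfun kp km s \<alpha> = complex_of_real (Qfun kp km \<alpha>) *
     exp (- \<i> * complex_of_real (km * dot2 (vmap kp km \<alpha>) s))"

definition hfun :: "real \<Rightarrow> real \<Rightarrow> real \<times> real \<Rightarrow> nat \<Rightarrow> real \<times> real \<Rightarrow> complex" where
  "hfun kp km s q \<alpha> = complex_of_real
     ((if q = 1 then fst (vmap kp km \<alpha>) else snd (vmap kp km \<alpha>))) * gfun kp km s \<alpha>"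

end

(*
  Up to the nonvanishing factor Q(alpha), the given combination is the restriction to the
  directions v(alpha) = (cos phi, sin phi) of the entire function
    F(z) = sum_l (c_l + d_l1 cos z + d_l2 sin z) exp(-i k_- (x_l cos z + y_l sin z)),
  where s_l = (x_l, y_l); these directions fill an open arc, so F vanishes identically.
  On the curve exp(i z) = w / r with w = 1 + i t, the l-th term multiplied by r is a quadratic
  polynomial in r times exp(a_l r + b_l / r) with Re a_l = k_- (y_l - t x_l) / (2 (1 + t^2)).
  For all but finitely many t these growth rates are distinct, and letting r tend to infinity
  isolates the fastest growing term with a nonzero coefficient.
*)

theory Submission
  imports Defs "HOL-Complex_Analysis.Complex_Analysis" "HOL-Computational_Algebra.Polynomial"
    "HOL-Real_Asymp.Real_Asymp"
begin

lemma poly_of_real_tendsto_0_imp_eq_0: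
  fixes p :: "'a::real_normed_field poly"
  assumes "((\<lambda>s::real. poly p (of_real s)) \<longlongrightarrow> 0) at_top"
  shows "p = 0"
proof (rule ccontr)
  assume "p \<noteq> 0"
  show False
  proof (cases "degree p = 0")
    case True
    then obtain a where "p = [:a:]" by (rule degree_eq_zeroE)
    with assms \<open>p \<noteq> 0\<close> show False by (simp add: tendsto_const_iff)
  next
    case False
    then have "filterlim (\<lambda>s::real. poly p (of_real s)) at_infinity at_top"
      by (intro filterlim_compose[OF filterlim_poly_at_infinity filterlim_of_real_at_infinity]) simp
    with assms show False by (intro not_tendsto_and_filterlim_at_infinity) simp_all
  qed
qed

lemma poly_times_exp_tendsto_0:
  fixes p :: "complex poly" and a :: complex
  assumes "Re a < 0"
  shows "((\<lambda>s::real. poly p (of_real s) * exp (a * of_real s)) \<longlongrightarrow> 0) at_top"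
proof -
  have "((\<lambda>s::real. of_real s ^ n * exp (a * of_real s)) \<longlongrightarrow> 0) at_top" for n
  proof (rule tendsto_norm_zero_cancel)
    have "((\<lambda>s::real. s ^ n * exp (Re a * s)) \<longlongrightarrow> 0) at_top"
      using assms by real_asymp
    moreover have "\<forall>\<^sub>F s in at_top. s ^ n * exp (Re a * s) = norm (of_real s ^ n * exp (a * of_real s))"
      using eventually_ge_at_top[of "0::real"] by eventually_elim (simp add: norm_mult norm_power)
    ultimately show "((\<lambda>s::real. norm (of_real s ^ n * exp (a * of_real s))) \<longlongrightarrow> 0) at_top"
      by (rule Lim_transform_eventually)
  qed
  then have "((\<lambda>s::real. \<Sum>i\<le>degree p. coeff p i * (of_real s ^ i * exp (a * of_real s))) \<longlongrightarrow> 0) at_top"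
    by (intro tendsto_null_sum tendsto_mult_right_zero)
  then show ?thesis
    by (simp add: poly_altdef sum_distrib_right mult.assoc)
qed

lemma tendsto_exp_divide_of_real_at_top:
  fixes b :: complex
  shows "((\<lambda>r::real. exp (b / of_real r)) \<longlongrightarrow> 1) at_top"
proof -
  have "((\<lambda>r::real. b * of_real (1 / r)) \<longlongrightarrow> b * of_real 0) at_top"
    by (intro tendsto_intros) real_asymp
  then have "((\<lambda>r::real. exp (b * of_real (1 / r))) \<longlongrightarrow> exp (b * of_real 0)) at_top"
    by (rule tendsto_exp)
  then show ?thesis by (simp add: divide_inverse)
qed

lemma tendsto_0_cancel_right:
  fixes f g :: "'b \<Rightarrow> 'a::real_normed_field"
  assumes "((\<lambda>x. f x * g x) \<longlongrightarrow> 0) F" and "(g \<longlongrightarrow> c) F" and "c \<noteq> 0"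
  shows "(f \<longlongrightarrow> 0) F"
proof -
  have "((\<lambda>x. f x * g x / g x) \<longlongrightarrow> 0 / c) F"
    using assms by (intro tendsto_divide)
  moreover have "\<forall>\<^sub>F x in F. f x * g x / g x = f x"
    using tendsto_imp_eventually_ne[OF assms(2,3)] by eventually_elim simp
  ultimately show ?thesis
    by (simp add: tendsto_cong)
qed

lemma poly_exp_sum_eq_0_imp_poly_eq_0:
  fixes L :: "'i set" and p :: "'i \<Rightarrow> complex poly" and a :: "'i \<Rightarrow> complex"
    and g :: "'i \<Rightarrow> real \<Rightarrow> complex"
  assumes "finite L" and inj: "inj_on (\<lambda>l. Re (a l)) L"
    and g: "\<And>l. l \<in> L \<Longrightarrow> (g l \<longlongrightarrow> 1) at_top"
    and sum0: "\<forall>\<^sub>F s in at_top. (\<Sum>l\<in>L. poly (p l) (of_real s) * exp (a l * of_real s) * g l s) = 0"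
  shows "\<forall>l\<in>L. p l = 0"
proof (rule ccontr)
  define L' where "L' = {l\<in>L. p l \<noteq> 0}"
  assume "\<not> (\<forall>l\<in>L. p l = 0)"
  then have "finite L'" "L' \<noteq> {}" using \<open>finite L\<close> by (auto simp: L'_def)
  then obtain l0 where l0: "l0 \<in> L'" and max: "\<And>l. l \<in> L' \<Longrightarrow> Re (a l) \<le> Re (a l0)"
    using ex_is_arg_min_if_finite[of L' "\<lambda>l. - Re (a l)"] by (auto simp: is_arg_min_linorder)
  define T where "T l s = poly (p l) (of_real s) * exp ((a l - a l0) * of_real s) * g l s" for l s
  have "\<forall>\<^sub>F s in at_top. (\<Sum>l\<in>L'. T l s) = 0"
    using sum0
  proof eventually_elim
    case (elim s)
    have "(\<Sum>l\<in>L'. T l s) = (\<Sum>l\<in>L'. poly (p l) (of_real s) * exp (a l * of_real s) * g l s) / exp (a l0 * of_real s)"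
      by (simp add: T_def sum_divide_distrib exp_diff left_diff_distrib)
    also have "(\<Sum>l\<in>L'. poly (p l) (of_real s) * exp (a l * of_real s) * g l s) = 0"
      using elim \<open>finite L\<close> by (subst sum.mono_neutral_left) (auto simp: L'_def)
    finally show ?case by simp
  qed
  then have "\<forall>\<^sub>F s in at_top. T l0 s = - (\<Sum>l\<in>L' - {l0}. T l s)"
    by eventually_elim (simp add: sum.remove[OF \<open>finite L'\<close> l0] add_eq_0_iff)
  moreover have "((\<lambda>s. - (\<Sum>l\<in>L' - {l0}. T l s)) \<longlongrightarrow> - 0) at_top"
  proof (intro tendsto_minus tendsto_null_sum)
    fix l assume l: "l \<in> L' - {l0}"
    with inj l0 max have "Re (a l - a l0) < 0"
      by (force simp: L'_def inj_on_def less_le)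
    then show "(T l \<longlongrightarrow> 0) at_top"
      unfolding T_def using tendsto_mult[OF poly_times_exp_tendsto_0 g, of "a l - a l0" l "p l"] l
      by (simp add: L'_def)
  qed
  ultimately have "(T l0 \<longlongrightarrow> 0) at_top"
    by (simp add: tendsto_cong)
  moreover have "T l0 = (\<lambda>s. poly (p l0) (of_real s) * g l0 s)"
    by (simp add: T_def fun_eq_iff)
  ultimately have "((\<lambda>s. poly (p l0) (of_real s) * g l0 s) \<longlongrightarrow> 0) at_top"
    by simp
  then have "((\<lambda>s. poly (p l0) (of_real s)) \<longlongrightarrow> 0) at_top"
    by (rule tendsto_0_cancel_right[where c = 1]) (use l0 g in \<open>auto simp: L'_def\<close>)
  with l0 show False
    using poly_of_real_tendsto_0_imp_eq_0 by (auto simp: L'_def)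
qed

lemma finite_ex_slope_inj_on:
  fixes P :: "(real \<times> real) set"
  assumes "finite P"
  shows "\<exists>t. inj_on (\<lambda>(x, y). y - t * x) P"
proof -
  define bad where "bad = (\<Union>p\<in>P. \<Union>q\<in>P - {p}. {t. snd p - t * fst p = snd q - t * fst q})"
  have finite_line: "finite {t. snd p - t * fst p = snd q - t * fst q}" if "p \<noteq> q" for p q :: "real \<times> real"
  proof (rule finite_subset)
    show "{t. snd p - t * fst p = snd q - t * fst q} \<subseteq> {(snd p - snd q) / (fst p - fst q)}"
    proof
      fix t assume "t \<in> {t. snd p - t * fst p = snd q - t * fst q}"
      then have t: "snd p - snd q = t * (fst p - fst q)" by (simp add: algebra_simps)
      with that have "fst p - fst q \<noteq> 0" by (auto simp: prod_eq_iff)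
      with t show "t \<in> {(snd p - snd q) / (fst p - fst q)}" by simp
    qed
  qed simp
  have "finite bad"
    unfolding bad_def using assms by (intro finite_UN_I finite_line) auto
  then obtain t where "t \<notin> bad" using ex_new_if_finite[OF infinite_UNIV_char_0] by blast
  have "inj_on (\<lambda>(x, y). y - t * x) P"
  proof (rule inj_onI, rule ccontr)
    fix p q assume "p \<in> P" "q \<in> P" "p \<noteq> q" "(\<lambda>(x, y). y - t * x) p = (\<lambda>(x, y). y - t * x) q"
    then have "t \<in> bad" unfolding bad_def case_prod_beta by blast
    with \<open>t \<notin> bad\<close> show False ..
  qed
  then show ?thesis ..
qed

lemma cos_sin_lincomb_exp:
  fixes a b z :: complex
  shows "a * cos z + b * sin z = (a - \<i> * b) / 2 * exp (\<i> * z) + (a + \<i> * b) / 2 / exp (\<i> * z)"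
proof -
  have "exp (\<i> * z) \<noteq> 0" by simp
  then show ?thesis
    by (simp add: cos_exp_eq sin_exp_eq exp_minus divide_simps) (simp add: algebra_simps)
qed

lemma plane_wave_at_exp_i_eq:
  fixes c d1 d2 k x y w z :: complex and r :: real
  assumes u: "exp (\<i> * z) = w / of_real r" and "w \<noteq> 0" and "r \<noteq> 0"
  shows "of_real r * ((c + d1 * cos z + d2 * sin z) * exp (- \<i> * k * (x * cos z + y * sin z)))
    = poly [:w * (d1 - \<i> * d2) / 2, c, (d1 + \<i> * d2) / (2 * w):] (of_real r)
      * exp (- \<i> * k * (x + \<i> * y) / (2 * w) * of_real r) * exp (- \<i> * k * w * (x - \<i> * y) / 2 / of_real r)"
proof -
  have P: "of_real r * (c + d1 * cos z + d2 * sin z)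
      = poly [:w * (d1 - \<i> * d2) / 2, c, (d1 + \<i> * d2) / (2 * w):] (of_real r)"
    unfolding add.assoc cos_sin_lincomb_exp u using assms by (simp add: field_simps power2_eq_square)
  have E: "- \<i> * k * (x * cos z + y * sin z)
      = - \<i> * k * (x + \<i> * y) / (2 * w) * of_real r + - \<i> * k * w * (x - \<i> * y) / 2 / of_real r"
    unfolding cos_sin_lincomb_exp u using assms by (simp add: field_simps)
  show ?thesis
    by (subst mult.assoc[symmetric], subst P, subst E) (simp only: exp_add mult.assoc)
qed

lemma plane_wave_sum_eq_0_imp_coeffs_eq_0:
  fixes L :: "'i set" and x y :: "'i \<Rightarrow> real" and c d1 d2 :: "'i \<Rightarrow> complex" and k :: real
  assumes "finite L" and "k \<noteq> 0" and inj: "inj_on (\<lambda>l. (x l, y l)) L"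
    and sum0: "\<And>z. (\<Sum>l\<in>L. (c l + d1 l * cos z + d2 l * sin z)
                  * exp (- \<i> * of_real k * (of_real (x l) * cos z + of_real (y l) * sin z))) = 0"
  shows "\<forall>l\<in>L. c l = 0 \<and> d1 l = 0 \<and> d2 l = 0"
proof -
  obtain t where "inj_on (\<lambda>(u, v). v - t * u) ((\<lambda>l. (x l, y l)) ` L)"
    using finite_ex_slope_inj_on \<open>finite L\<close> by blast
  with inj have inj_t: "inj_on (\<lambda>l. y l - t * x l) L"
    by (auto dest: comp_inj_on simp: comp_def)
  define w where "w = 1 + \<i> * of_real t"
  have "w \<noteq> 0" by (simp add: w_def complex_eq_iff)
  define p where "p l = [:w * (d1 l - \<i> * d2 l) / 2, c l, (d1 l + \<i> * d2 l) / (2 * w):]" for l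
  define a where "a l = - \<i> * of_real k * (of_real (x l) + \<i> * of_real (y l)) / (2 * w)" for l
  define b where "b l = - \<i> * of_real k * w * (of_real (x l) - \<i> * of_real (y l)) / 2" for l
  have "1 + t\<^sup>2 > 0" by (intro add_pos_nonneg) auto
  then have "Re (a l) = k / (2 * (1 + t\<^sup>2)) * (y l - t * x l)" for l
    by (simp add: a_def w_def Re_divide field_simps power2_eq_square)
  with inj_t \<open>k \<noteq> 0\<close> \<open>1 + t\<^sup>2 > 0\<close> have inj_a: "inj_on (\<lambda>l. Re (a l)) L"
    by (simp add: inj_on_def)
  have "\<forall>\<^sub>F r in at_top. (\<Sum>l\<in>L. poly (p l) (of_real r) * exp (a l * of_real r) * exp (b l / of_real r)) = 0"
    using eventually_gt_at_top[of "0::real"]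
  proof eventually_elim
    case (elim r)
    define z where "z = - \<i> * Ln (w / of_real r)"
    have "exp (\<i> * z) = w / of_real r"
      using \<open>w \<noteq> 0\<close> elim by (simp add: z_def)
    then have "(\<Sum>l\<in>L. poly (p l) (of_real r) * exp (a l * of_real r) * exp (b l / of_real r))
        = of_real r * (\<Sum>l\<in>L. (c l + d1 l * cos z + d2 l * sin z)
                  * exp (- \<i> * of_real k * (of_real (x l) * cos z + of_real (y l) * sin z)))"
      using \<open>w \<noteq> 0\<close> elim unfolding sum_distrib_left p_def a_def b_def
      by (intro sum.cong refl plane_wave_at_exp_i_eq[symmetric]) auto
    then show ?case by (simp only: sum0 mult_zero_right)
  qed
  then have "\<forall>l\<in>L. p l = 0"
    using \<open>finite L\<close> inj_a tendsto_exp_divide_of_real_at_top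
    by (intro poly_exp_sum_eq_0_imp_poly_eq_0[where g = "\<lambda>l r. exp (b l / of_real r)"])
  then show ?thesis
    using \<open>w \<noteq> 0\<close> by (auto simp: p_def)
qed

lemma of_real_islimpt:
  assumes "x islimpt S"
  shows "(of_real x :: 'a::real_normed_algebra_1) islimpt of_real ` S"
proof (unfold islimpt_approachable, intro allI impI)
  fix e :: real assume "e > 0"
  then obtain y where "y \<in> S" "y \<noteq> x" "dist y x < e"
    using assms islimpt_approachable by blast
  then show "\<exists>y'\<in>of_real ` S. y' \<noteq> of_real x \<and> dist y' (of_real x :: 'a) < e"
    by (intro bexI[of _ "of_real y"]) (auto simp: dist_norm dist_real_def simp flip: of_real_diff)
qed

lemma entire_eq_0_if_eq_0_on_real_open:
  fixes f :: "complex \<Rightarrow> complex" and U :: "real set"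
  assumes "f holomorphic_on UNIV" and "open U" and "x \<in> U" and "\<And>x. x \<in> U \<Longrightarrow> f (of_real x) = 0"
  shows "f z = 0"
proof (rule analytic_continuation[of f UNIV "of_real ` U" "of_real x"])
  show "of_real x islimpt (of_real ` U :: complex set)"
    using assms by (intro of_real_islimpt open_imp_islimpt)
qed (use assms in auto)

lemma lower_semicircle_point_in_Shat:
  assumes "kp > 0" and "km > 0" and "\<bar>a\<bar> < 1" and "\<bar>a\<bar> < km / kp"
  shows "(a, - sqrt (1 - a\<^sup>2)) \<in> Shat kp km"
proof -
  define \<theta> where "\<theta> = 2 * pi - arccos a"
  have "cos \<theta> = a" and "sin \<theta> = - sqrt (1 - a\<^sup>2)"
    using \<open>\<bar>a\<bar> < 1\<close> by (simp_all add: \<theta>_def cos_diff sin_diff cos_arccos sin_arccos)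
  moreover have "pi + theta_c kp km < \<theta> \<and> \<theta> < 2 * pi - theta_c kp km"
  proof (cases "kp > km")
    case True
    then have "km / kp < 1" using assms by simp
    moreover have "- (km / kp) < a" and "a < km / kp"
      using \<open>\<bar>a\<bar> < km / kp\<close> by auto
    ultimately have "arccos (km / kp) < arccos a" and "arccos a < arccos (- (km / kp))"
      using \<open>\<bar>a\<bar> < 1\<close> by (auto intro!: arccos_less_arccos)
    moreover have "arccos (- (km / kp)) = pi - arccos (km / kp)"
      using \<open>km / kp < 1\<close> assms by (intro arccos_minus) auto
    ultimately show ?thesis using True by (simp add: theta_c_def \<theta>_def)
  next
    case False
    then show ?thesis using arccos_lt_bounded[of a] \<open>\<bar>a\<bar> < 1\<close> by (simp add: theta_c_def \<theta>_def)
  qed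
  ultimately show ?thesis unfolding Shat_def by force
qed

lemma ex_Shat_vmap_eq:
  assumes "kp > 0" and "km > 0" and "pi < \<phi>" and "\<phi> < 2 * pi" and "\<bar>cos \<phi>\<bar> < kp / km"
  shows "\<exists>\<alpha>\<in>Shat kp km. vmap kp km \<alpha> = (cos \<phi>, sin \<phi>) \<and> Qfun kp km \<alpha> \<noteq> 0"
proof -
  define a where "a = km / kp * cos \<phi>"
  define \<alpha> where "\<alpha> = (a, - sqrt (1 - a\<^sup>2))"
  have "sin \<phi> < 0"
    using sin_gt_zero[of "\<phi> - pi"] assms by (simp add: sin_diff)
  then have "\<bar>cos \<phi>\<bar> < 1"
    by (simp add: cos_squared_eq flip: abs_square_less_1)
  have "\<bar>a\<bar> < 1" and "\<bar>a\<bar> < km / kp"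
    using assms \<open>\<bar>cos \<phi>\<bar> < 1\<close> by (simp_all add: a_def abs_mult field_simps)
  then have "\<alpha> \<in> Shat kp km" and "sqrt (1 - a\<^sup>2) > 0"
    using assms by (simp_all add: \<alpha>_def lower_semicircle_point_in_Shat abs_square_less_1)
  have "(kp / km)\<^sup>2 * a\<^sup>2 = (cos \<phi>)\<^sup>2"
    using assms by (simp add: a_def power_mult_distrib power_divide)
  then have "sqrt (1 - (kp / km)\<^sup>2 * a\<^sup>2) = - sin \<phi>"
    using \<open>sin \<phi> < 0\<close> by (simp flip: sin_squared_eq)
  then have v: "vmap kp km \<alpha> = (cos \<phi>, sin \<phi>)"
    using assms \<open>sqrt (1 - a\<^sup>2) > 0\<close> by (simp add: vmap_def \<alpha>_def a_def)
  have "snd \<alpha> < 0"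
    using \<open>sqrt (1 - a\<^sup>2) > 0\<close> by (simp add: \<alpha>_def)
  then have "kp / km * snd \<alpha> < 0"
    using assms by (simp add: mult_pos_neg divide_neg_pos)
  then have "Qfun kp km \<alpha> \<noteq> 0"
    using \<open>snd \<alpha> < 0\<close> \<open>sin \<phi> < 0\<close> assms by (simp add: Qfun_def v)
  with \<open>\<alpha> \<in> Shat kp km\<close> v show ?thesis by blast
qed

lemma sum_gfun_hfun_eq:
  fixes d :: "nat \<Rightarrow> complex"
  assumes "vmap kp km \<alpha> = (cos \<phi>, sin \<phi>)"
  shows "c * gfun kp km s \<alpha> + (\<Sum>q=1..2. d q * hfun kp km s q \<alpha>)
    = of_real (Qfun kp km \<alpha>) * ((c + d 1 * cos (of_real \<phi>) + d 2 * sin (of_real \<phi>))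
        * exp (- \<i> * of_real km * (of_real (fst s) * cos (of_real \<phi>) + of_real (snd s) * sin (of_real \<phi>))))"
  using assms
  by (simp add: numeral_2_eq_2 gfun_def hfun_def dot2_def cos_of_real sin_of_real algebra_simps)

lemma gfun_hfun_sum_eq_0_imp_plane_wave_sum_eq_0:
  fixes L :: "'i set" and s :: "'i \<Rightarrow> real \<times> real"
    and c :: "'i \<Rightarrow> complex" and d :: "'i \<Rightarrow> nat \<Rightarrow> complex"
  assumes "kp > 0" and "km > 0"
    and sum0: "\<forall>\<alpha>\<in>Shat kp km.
      (\<Sum>l\<in>L. c l * gfun kp km (s l) \<alpha> + (\<Sum>q=1..2. d l q * hfun kp km (s l) q \<alpha>)) = 0"
  shows "(\<Sum>l\<in>L. (c l + d l 1 * cos z + d l 2 * sin z)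
    * exp (- \<i> * of_real km * (of_real (fst (s l)) * cos z + of_real (snd (s l)) * sin z))) = 0"
proof -
  define F where "F z = (\<Sum>l\<in>L. (c l + d l 1 * cos z + d l 2 * sin z)
    * exp (- \<i> * of_real km * (of_real (fst (s l)) * cos z + of_real (snd (s l)) * sin z)))" for z
  define U where "U = {\<phi>. pi < \<phi> \<and> \<phi> < 2 * pi \<and> \<bar>cos \<phi>\<bar> < kp / km}"
  have "F holomorphic_on UNIV"
    unfolding F_def by (intro holomorphic_intros)
  moreover have "open U"
    unfolding U_def by (intro open_Collect_conj open_Collect_less continuous_intros)
  moreover have "3 / 2 * pi \<in> U"
    using assms(1,2) cos_3over2_pi by (simp add: U_def)
  moreover have "F (of_real \<phi>) = 0" if \<phi>: "\<phi> \<in> U" for \<phi>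
  proof -
    obtain \<alpha> where \<alpha>: "\<alpha> \<in> Shat kp km" and v: "vmap kp km \<alpha> = (cos \<phi>, sin \<phi>)"
      and "Qfun kp km \<alpha> \<noteq> 0"
      using ex_Shat_vmap_eq[OF assms(1,2)] \<phi> unfolding U_def by blast
    have "of_real (Qfun kp km \<alpha>) * F (of_real \<phi>)
        = (\<Sum>l\<in>L. c l * gfun kp km (s l) \<alpha> + (\<Sum>q=1..2. d l q * hfun kp km (s l) q \<alpha>))"
      unfolding F_def sum_distrib_left by (simp only: sum_gfun_hfun_eq[OF v])
    also have "\<dots> = 0"
      using sum0 \<alpha> by blast
    finally show ?thesis
      using \<open>Qfun kp km \<alpha> \<noteq> 0\<close> by simp
  qed
  ultimately have "F z = 0"
    by (rule entire_eq_0_if_eq_0_on_real_open)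
  then show ?thesis
    by (simp only: F_def)
qed

theorem lemmaA1:
  fixes kp km :: real and M :: nat and s :: "nat \<Rightarrow> real \<times> real"
    and c :: "nat \<Rightarrow> complex" and d :: "nat \<Rightarrow> nat \<Rightarrow> complex"
  assumes "kp > 0" and "km > 0" and "kp \<noteq> km"
    and "\<forall>l\<in>{1..M}. snd (s l) < 0"
    and "inj_on s {1..M}"
    and "\<forall>\<alpha>\<in>Shat kp km.
           (\<Sum>l=1..M. c l * gfun kp km (s l) \<alpha>
              + (\<Sum>q=1..2. d l q * hfun kp km (s l) q \<alpha>)) = 0"
  shows "(\<forall>l\<in>{1..M}. c l = 0) \<and> (\<forall>l\<in>{1..M}. \<forall>q\<in>{1..2}. d l q = 0)"
proof -
  have "inj_on (\<lambda>l. (fst (s l), snd (s l))) {1..M}"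
    using assms(5) by simp
  then have "\<forall>l\<in>{1..M}. c l = 0 \<and> d l 1 = 0 \<and> d l 2 = 0"
    using assms(2) gfun_hfun_sum_eq_0_imp_plane_wave_sum_eq_0[OF assms(1,2,6)]
    by (intro plane_wave_sum_eq_0_imp_coeffs_eq_0[where k = km and x = "\<lambda>l. fst (s l)" and y = "\<lambda>l. snd (s l)"]) auto
  then show ?thesis
    by (auto simp: numeral_2_eq_2 le_Suc_eq)
qed

end
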